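(* Let $N\ge1$ and let $q,\gamma,s_0,\xi_0$ be generic nonzero complex numbers; set $u_0=(s_0\xi_0\gamma)^{-1}$. Define $$\mathsf z(u,v)=\frac{(1-\gamma)(q-\gamma s_0^2)(1-uv)+(1-q)(1-\gamma\xi_0s_0u)(1-\gamma\xi_0^{-1}s_0v)}{(1-uv)(1-quv)}.$$ Then, with $u_i=u_0q^{i-1}$ for $i=1,\dots,N$ and generic $v_1,\dots,v_N$, $$\frac{\prod_{i,j=1}^N(1-u_iv_j)(1-qu_iv_j)}{\prod_{1\le i<j\le N}(u_i-u_j)(v_i-v_j)}\det[\mathsf z(u_i,v_j)]_{i,j=1}^N=q^{N^2}\prod_{i,j=1}^N\Big(1-v_i\frac{q^{j-1}}{s_0\xi_0\gamma}\Big)\prod_{j=1}^N(1-\gamma q^{-j+1})(1-s_0^2\gamma q^{-j}).$$ *)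

theory Defs
  imports Complex_Main "Jordan_Normal_Form.Determinant"
begin

definition zfun :: "complex \<Rightarrow> complex \<Rightarrow> complex \<Rightarrow> complex \<Rightarrow> complex \<Rightarrow> complex \<Rightarrow> complex" where
  "zfun q \<gamma> s0 \<xi>0 u v =
     ((1 - \<gamma>) * (q - \<gamma> * s0\<^sup>2) * (1 - u * v)
      + (1 - q) * (1 - \<gamma> * \<xi>0 * s0 * u) * (1 - \<gamma> * inverse \<xi>0 * s0 * v))
     / ((1 - u * v) * (1 - q * u * v))"

end

theory Submission
  imports Defs
begin

text \<open>Partial fractions in \<open>v\<close> write \<open>z(u,v) = \<alpha>(u)/(1 - uv) + \<beta>(u)/(1 - quv)\<close>.
  Along the progression \<open>u\<^sub>i = q u\<^sub>i\<^sub>-\<^sub>1\<close> the first kernel of row \<open>i\<close> is the second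
  kernel of row \<open>i - 1\<close>, and \<open>\<alpha>\<close> vanishes at the first node \<open>(s\<^sub>0\<xi>\<^sub>0\<gamma>)\<^sup>-\<^sup>1\<close>. So
  \<open>[z(u\<^sub>i,v\<^sub>j)]\<close> is a lower bidiagonal matrix with diagonal \<open>\<beta>(u\<^sub>i)\<close> times the Cauchy matrix
  \<open>[1/(1 - qu\<^sub>iv\<^sub>j)]\<close>, and the Cauchy determinant formula evaluates the rest.\<close>

lemma prod_square_lessThan_Suc:
  fixes f :: "nat \<Rightarrow> nat \<Rightarrow> 'a::comm_monoid_mult"
  shows "(\<Prod>i<Suc n. \<Prod>j<Suc n. f i j)
       = (\<Prod>i<n. \<Prod>j<n. f i j) * (\<Prod>i<n. f i n) * (\<Prod>j<Suc n. f n j)"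
  by (simp add: prod.distrib ac_simps)

lemma prod_upper_triangle_lessThan_Suc:
  fixes f :: "nat \<Rightarrow> nat \<Rightarrow> 'a::comm_monoid_mult"
  shows "(\<Prod>i<Suc n. \<Prod>j\<in>{i<..<Suc n}. f i j) = (\<Prod>i<n. \<Prod>j\<in>{i<..<n}. f i j) * (\<Prod>i<n. f i n)"
proof -
  have "(\<Prod>j\<in>{i<..<Suc n}. f i j) = (\<Prod>j\<in>{i<..<n}. f i j) * f i n" if "i < n" for i
  proof -
    have "{i<..<Suc n} = insert n {i<..<n}"
      using that by auto
    then show ?thesis by (simp add: mult.commute)
  qed
  moreover have "{n<..<Suc n} = {}" by auto
  ultimately show ?thesis
    by (simp add: prod.distrib)
qed

lemma prod_power_complements:
  fixes c :: "'a::comm_monoid_mult"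
  shows "(\<Prod>i<n. c ^ (n - Suc i)) * (\<Prod>i<n. c ^ Suc i) = c ^ (n * n)"
proof -
  have "(\<Prod>i<n. c ^ (n - Suc i)) * (\<Prod>i<n. c ^ Suc i) = (\<Prod>i<n. c ^ n)"
    unfolding prod.distrib[symmetric] power_add[symmetric] by (intro prod.cong) auto
  then show ?thesis by (simp add: power_mult)
qed

lemma det_mat_scale_rows_cols:
  fixes a b :: "nat \<Rightarrow> 'a::comm_ring_1" and f :: "nat \<Rightarrow> nat \<Rightarrow> 'a"
  shows "det (mat n n (\<lambda>(i, j). a i * b j * f i j))
       = (\<Prod>i<n. a i) * (\<Prod>j<n. b j) * det (mat n n (\<lambda>(i, j). f i j))"
proof -
  have "(\<Prod>i<n. mat n n (\<lambda>(i, j). a i * b j * f i j) $$ (i, p i))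
      = (\<Prod>i<n. a i) * (\<Prod>j<n. b j) * (\<Prod>i<n. mat n n (\<lambda>(i, j). f i j) $$ (i, p i))"
    if p: "p permutes {..<n}" for p
  proof -
    have p_lt: "p i < n" if "i < n" for i
      using permutes_in_image[OF p] that by simp
    have "(\<Prod>i<n. mat n n (\<lambda>(i, j). a i * b j * f i j) $$ (i, p i))
        = (\<Prod>i<n. a i) * (\<Prod>i<n. b (p i)) * (\<Prod>i<n. f i (p i))"
      using p_lt by (simp add: prod.distrib)
    also have "(\<Prod>i<n. b (p i)) = (\<Prod>j<n. b j)"
      using prod.permute[OF p, of b] by (simp add: comp_def)
    finally show ?thesis using p_lt by simp
  qed
  then show ?thesis
    unfolding det_def'[OF mat_carrier] atLeast0LessThan sum_distrib_left
    by (intro sum.cong) (simp_all add: ac_simps)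
qed

lemma det_add_multiples_of_last_row:
  fixes f :: "nat \<Rightarrow> nat \<Rightarrow> 'a::comm_ring_1"
  shows "det (mat (Suc n) (Suc n) (\<lambda>(i, j). f i j + (if i < n then c i * f n j else 0)))
       = det (mat (Suc n) (Suc n) (\<lambda>(i, j). f i j))"
proof -
  define P where "P = mat (Suc n) (Suc n) (\<lambda>(i, k). if k = i then 1 else if k = n then c i else 0)"
  have P: "P \<in> carrier_mat (Suc n) (Suc n)" unfolding P_def by simp
  have "det P = prod_list (diag_mat P)"
    by (rule det_upper_triangular[OF _ P]) (auto simp: P_def intro!: upper_triangularI)
  then have "det P = 1"
    using P by (simp add: P_def prod_list_diag_prod)
  moreover have "mat (Suc n) (Suc n) (\<lambda>(i, j). f i j + (if i < n then c i * f n j else 0))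
      = P * mat (Suc n) (Suc n) (\<lambda>(i, j). f i j)"
  proof (rule eq_matI)
    fix i j assume "i < dim_row (P * mat (Suc n) (Suc n) (\<lambda>(i, j). f i j))"
      and "j < dim_col (P * mat (Suc n) (Suc n) (\<lambda>(i, j). f i j))"
    then have ij: "i < Suc n" "j < Suc n" using P by auto
    have "(P * mat (Suc n) (Suc n) (\<lambda>(i, j). f i j)) $$ (i, j)
        = (\<Sum>k<n. P $$ (i, k) * f k j) + P $$ (i, n) * f n j"
      using ij P by (simp add: scalar_prod_def atLeast0LessThan)
    also have "(\<Sum>k<n. P $$ (i, k) * f k j) = (\<Sum>k<n. if k = i then f k j else 0)"
      using ij by (intro sum.cong) (simp_all add: P_def)
    also have "\<dots> + P $$ (i, n) * f n j = f i j + (if i < n then c i * f n j else 0)"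
      using ij by (auto simp: P_def less_Suc_eq)
    finally show "mat (Suc n) (Suc n) (\<lambda>(i, j). f i j + (if i < n then c i * f n j else 0)) $$ (i, j)
        = (P * mat (Suc n) (Suc n) (\<lambda>(i, j). f i j)) $$ (i, j)"
      using ij by simp
  qed (use P in auto)
  ultimately show ?thesis by (simp add: det_mult[OF P])
qed

lemma det_mat_transpose_entries:
  fixes f :: "nat \<Rightarrow> nat \<Rightarrow> 'a::comm_ring_1"
  shows "det (mat n n (\<lambda>(i, j). f j i)) = det (mat n n (\<lambda>(i, j). f i j))"
proof -
  have "mat n n (\<lambda>(i, j). f j i) = transpose_mat (mat n n (\<lambda>(i, j). f i j))"
    by auto
  then show ?thesis by (simp add: det_transpose[OF mat_carrier])
qed

lemma det_add_multiples_of_last_col: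
  fixes f :: "nat \<Rightarrow> nat \<Rightarrow> 'a::comm_ring_1"
  shows "det (mat (Suc n) (Suc n) (\<lambda>(i, j). f i j + (if j < n then c j * f i n else 0)))
       = det (mat (Suc n) (Suc n) (\<lambda>(i, j). f i j))"
proof -
  have "det (mat (Suc n) (Suc n) (\<lambda>(i, j). f i j + (if j < n then c j * f i n else 0)))
      = det (mat (Suc n) (Suc n) (\<lambda>(i, j). f j i + (if i < n then c i * f j n else 0)))"
    using det_mat_transpose_entries[of "Suc n" "\<lambda>i j. f j i + (if i < n then c i * f j n else 0)"]
    by simp
  also have "\<dots> = det (mat (Suc n) (Suc n) (\<lambda>(i, j). f j i))"
    by (rule det_add_multiples_of_last_row)
  also have "\<dots> = det (mat (Suc n) (Suc n) (\<lambda>(i, j). f i j))"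
    by (rule det_mat_transpose_entries)
  finally show ?thesis .
qed

lemma det_last_row_unit:
  fixes f :: "nat \<Rightarrow> nat \<Rightarrow> 'a::comm_ring_1"
  assumes "f n n = 1" and "\<And>j. j < n \<Longrightarrow> f n j = 0"
  shows "det (mat (Suc n) (Suc n) (\<lambda>(i, j). f i j)) = det (mat n n (\<lambda>(i, j). f i j))"
proof -
  let ?A = "mat (Suc n) (Suc n) (\<lambda>(i, j). f i j)"
  have "det ?A = (\<Sum>j<Suc n. f n j * cofactor ?A n j)"
    by (simp add: laplace_expansion_row[of ?A "Suc n" n])
  also have "\<dots> = det (mat_delete ?A n n)"
    using assms by (simp add: cofactor_def)
  also have "mat_delete ?A n n = mat n n (\<lambda>(i, j). f i j)"
    by (auto simp: mat_delete_def)
  finally show ?thesis .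
qed

lemma det_mat_bidiagonal_combination:
  fixes \<alpha> \<beta> :: "nat \<Rightarrow> 'a::comm_ring_1" and g :: "nat \<Rightarrow> nat \<Rightarrow> 'a"
  assumes "\<alpha> 0 = 0"
  shows "det (mat n n (\<lambda>(i, j). \<alpha> i * g (i - 1) j + \<beta> i * g i j))
       = (\<Prod>i<n. \<beta> i) * det (mat n n (\<lambda>(i, j). g i j))"
proof -
  define B where "B = mat n n (\<lambda>(i, k). if k = i then \<beta> i else if Suc k = i then \<alpha> i else 0)"
  have B: "B \<in> carrier_mat n n" unfolding B_def by simp
  have "det B = prod_list (diag_mat B)"
    by (rule det_lower_triangular[OF _ B]) (simp add: B_def)
  then have "det B = (\<Prod>i<n. \<beta> i)"
    using B by (simp add: B_def prod_list_diag_prod atLeast0LessThan)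
  moreover have "mat n n (\<lambda>(i, j). \<alpha> i * g (i - 1) j + \<beta> i * g i j) = B * mat n n (\<lambda>(i, j). g i j)"
  proof (rule eq_matI)
    fix i j assume "i < dim_row (B * mat n n (\<lambda>(i, j). g i j))"
      and "j < dim_col (B * mat n n (\<lambda>(i, j). g i j))"
    then have ij: "i < n" "j < n" using B by auto
    have "(B * mat n n (\<lambda>(i, j). g i j)) $$ (i, j) = (\<Sum>k<n. B $$ (i, k) * g k j)"
      using ij B by (simp add: scalar_prod_def atLeast0LessThan)
    also have "\<dots> = (\<Sum>k<n. (if k = i then \<beta> i * g k j else 0) + (if Suc k = i then \<alpha> i * g k j else 0))"
      using ij by (intro sum.cong) (simp_all add: B_def)
    also have "\<dots> = \<alpha> i * g (i - 1) j + \<beta> i * g i j"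
      using ij assms by (cases i) (simp_all add: sum.distrib)
    finally show "mat n n (\<lambda>(i, j). \<alpha> i * g (i - 1) j + \<beta> i * g i j) $$ (i, j)
        = (B * mat n n (\<lambda>(i, j). g i j)) $$ (i, j)"
      using ij by simp
  qed (use B in auto)
  ultimately show ?thesis by (simp add: det_mult[OF B])
qed

definition cauchy_mat :: "nat \<Rightarrow> (nat \<Rightarrow> 'a::field) \<Rightarrow> (nat \<Rightarrow> 'a) \<Rightarrow> 'a mat" where
  "cauchy_mat n x y = mat n n (\<lambda>(i, j). 1 / (1 - x i * y j))"

lemma det_cauchy_mat_Suc:
  fixes x y :: "nat \<Rightarrow> 'a::field"
  assumes nz: "\<And>i j. i \<le> n \<Longrightarrow> j \<le> n \<Longrightarrow> 1 - x i * y j \<noteq> 0"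
  shows "det (cauchy_mat (Suc n) x y)
       = (\<Prod>i<n. x i - x n) * (\<Prod>j<n. y j - y n)
         / ((\<Prod>i<n. 1 - x i * y n) * (\<Prod>j<Suc n. 1 - x n * y j)) * det (cauchy_mat n x y)"
proof -
  define E where "E i j = (if i < n then y j / (1 - x i * y j) else 1)" for i j
  have nz': "x i * y j \<noteq> 1" if "i < Suc n" "j < Suc n" for i j
    using nz that by fastforce
  have row_diff: "1 / (1 - a * c) - 1 / (1 - b * c) = (a - b) * c / ((1 - a * c) * (1 - b * c))"
    if "a * c \<noteq> 1" "b * c \<noteq> 1" for a b c :: 'a
    using that by (simp add: field_simps)
  have col_diff: "c / (1 - a * c) - d / (1 - a * d) = (c - d) / ((1 - a * d) * (1 - a * c))"
    if "a * c \<noteq> 1" "a * d \<noteq> 1" for a c d :: 'a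
    using that by (simp add: field_simps)
  have "det (cauchy_mat (Suc n) x y)
      = det (mat (Suc n) (Suc n) (\<lambda>(i, j). 1 / (1 - x i * y j) + (if i < n then - 1 * (1 / (1 - x n * y j)) else 0)))"
    unfolding cauchy_mat_def by (rule det_add_multiples_of_last_row[symmetric])
  also have "\<dots> = det (mat (Suc n) (Suc n) (\<lambda>(i, j).
      (if i < n then x i - x n else 1) * (1 / (1 - x n * y j)) * E i j))"
    by (intro arg_cong[of _ _ det] cong_mat) (auto simp: E_def less_Suc_eq nz' row_diff)
  also have "\<dots> = (\<Prod>i<Suc n. if i < n then x i - x n else 1) * (\<Prod>j<Suc n. 1 / (1 - x n * y j))
      * det (mat (Suc n) (Suc n) (\<lambda>(i, j). E i j))"
    by (rule det_mat_scale_rows_cols)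
  also have "(\<Prod>i<Suc n. if i < n then x i - x n else 1) = (\<Prod>i<n. x i - x n)"
    by simp
  also have "det (mat (Suc n) (Suc n) (\<lambda>(i, j). E i j))
      = det (mat (Suc n) (Suc n) (\<lambda>(i, j). E i j + (if j < n then - 1 * E i n else 0)))"
    by (rule det_add_multiples_of_last_col[symmetric])
  also have "\<dots> = det (mat n n (\<lambda>(i, j). E i j + (if j < n then - 1 * E i n else 0)))"
    by (rule det_last_row_unit) (simp_all add: E_def)
  also have "\<dots> = det (mat n n (\<lambda>(i, j). (1 / (1 - x i * y n)) * (y j - y n) * (1 / (1 - x i * y j))))"
    by (intro arg_cong[of _ _ det] cong_mat) (auto simp: E_def nz' col_diff)
  also have "\<dots> = (\<Prod>i<n. 1 / (1 - x i * y n)) * (\<Prod>j<n. y j - y n) * det (cauchy_mat n x y)"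
    unfolding cauchy_mat_def by (rule det_mat_scale_rows_cols)
  finally show ?thesis
    by (simp add: prod_dividef ac_simps)
qed

theorem det_cauchy_mat:
  fixes x y :: "nat \<Rightarrow> 'a::field"
  assumes "\<And>i j. i < n \<Longrightarrow> j < n \<Longrightarrow> 1 - x i * y j \<noteq> 0"
  shows "det (cauchy_mat n x y)
       = (\<Prod>i<n. \<Prod>j\<in>{i<..<n}. (x i - x j) * (y i - y j)) / (\<Prod>i<n. \<Prod>j<n. 1 - x i * y j)"
  using assms
proof (induction n)
  case 0
  then show ?case by (simp add: cauchy_mat_def)
next
  case (Suc n)
  have "det (cauchy_mat n x y)
      = (\<Prod>i<n. \<Prod>j\<in>{i<..<n}. (x i - x j) * (y i - y j)) / (\<Prod>i<n. \<Prod>j<n. 1 - x i * y j)"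
    using Suc.prems by (intro Suc.IH) simp
  moreover have "det (cauchy_mat (Suc n) x y)
       = (\<Prod>i<n. x i - x n) * (\<Prod>j<n. y j - y n)
         / ((\<Prod>i<n. 1 - x i * y n) * (\<Prod>j<Suc n. 1 - x n * y j)) * det (cauchy_mat n x y)"
    using Suc.prems by (intro det_cauchy_mat_Suc) simp
  ultimately show ?case
    by (simp only: prod_square_lessThan_Suc prod_upper_triangle_lessThan_Suc prod.distrib
        times_divide_times_eq ac_simps)
qed

lemma det_cauchy_mat_scaled:
  fixes x y :: "nat \<Rightarrow> 'a::field"
  assumes "\<And>i j. i < n \<Longrightarrow> j < n \<Longrightarrow> 1 - c * x i * y j \<noteq> 0"
  shows "det (cauchy_mat n (\<lambda>i. c * x i) y) * (\<Prod>i<n. \<Prod>j<n. 1 - c * x i * y j)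
       = (\<Prod>i<n. c ^ (n - Suc i)) * (\<Prod>i<n. \<Prod>j\<in>{i<..<n}. (x i - x j) * (y i - y j))"
proof -
  have "(\<Prod>i<n. \<Prod>j<n. 1 - c * x i * y j) \<noteq> 0"
    using assms by (simp add: prod_zero_iff)
  moreover have "det (cauchy_mat n (\<lambda>i. c * x i) y)
      = (\<Prod>i<n. \<Prod>j\<in>{i<..<n}. (c * x i - c * x j) * (y i - y j)) / (\<Prod>i<n. \<Prod>j<n. 1 - c * x i * y j)"
    using assms by (intro det_cauchy_mat) simp
  moreover have "(c * x i - c * x j) * (y i - y j) = c * ((x i - x j) * (y i - y j))" for i j
    by (simp add: algebra_simps)
  ultimately show ?thesis
    by (simp add: prod.distrib)
qed

lemma zfun_partial_fractions:
  fixes q \<gamma> s \<xi> u v w :: complex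
  assumes "\<gamma> \<noteq> 0" "s \<noteq> 0" "\<xi> \<noteq> 0" "q \<noteq> 0" "w \<noteq> 0"
    and "1 - u * v \<noteq> 0" "1 - q * u * v \<noteq> 0"
    and "u = inverse (s * \<xi> * \<gamma>) * w"
  shows "zfun q \<gamma> s \<xi> u v = (1 - w) * (1 - \<gamma>\<^sup>2 * s\<^sup>2 / w) / (1 - u * v)
     + q * w * (1 - \<gamma> / w) * (1 - s\<^sup>2 * \<gamma> / (q * w)) / (1 - q * u * v)"
proof -
  have w: "w = s * \<xi> * \<gamma> * u"
    using assms by (simp add: field_simps)
  have "u \<noteq> 0"
    using assms by simp
  then show ?thesis
    using assms(1-4,6,7) unfolding zfun_def w
    by (simp add: divide_simps) (simp add: algebra_simps power2_eq_square)
qed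

lemma det_zfun_mat_geometric:
  fixes q \<gamma> s \<xi> :: complex and u v :: "nat \<Rightarrow> complex"
  assumes "q \<noteq> 0" "\<gamma> \<noteq> 0" "s \<noteq> 0" "\<xi> \<noteq> 0"
    and u: "\<And>i. u i = inverse (s * \<xi> * \<gamma>) * q ^ i"
    and "\<And>i j. i < n \<Longrightarrow> j < n \<Longrightarrow> 1 - u i * v j \<noteq> 0"
    and "\<And>i j. i < n \<Longrightarrow> j < n \<Longrightarrow> 1 - q * u i * v j \<noteq> 0"
  shows "det (mat n n (\<lambda>(i, j). zfun q \<gamma> s \<xi> (u i) (v j)))
       = (\<Prod>i<n. q ^ Suc i) * (\<Prod>i<n. (1 - \<gamma> * q powi (- int i)) * (1 - s\<^sup>2 * \<gamma> * q powi (- int i - 1)))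
         * det (cauchy_mat n (\<lambda>i. q * u i) v)"
proof -
  define \<alpha> where "\<alpha> i = (1 - q ^ i) * (1 - \<gamma>\<^sup>2 * s\<^sup>2 / q ^ i)" for i
  define \<beta> where "\<beta> i = q ^ Suc i * (1 - \<gamma> / q ^ i) * (1 - s\<^sup>2 * \<gamma> / q ^ Suc i)" for i
  define g where "g i j = 1 / (1 - q * u i * v j)" for i j
  have "zfun q \<gamma> s \<xi> (u i) (v j) = \<alpha> i * g (i - 1) j + \<beta> i * g i j" if "i < n" "j < n" for i j
  proof -
    have "zfun q \<gamma> s \<xi> (u i) (v j) = \<alpha> i / (1 - u i * v j) + \<beta> i / (1 - q * u i * v j)"
      unfolding \<alpha>_def \<beta>_def using assms that
      by (subst zfun_partial_fractions[where w = "q ^ i"]) (simp_all add: mult.assoc)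
    moreover have "u i = q * u (i - 1)" if "i > 0"
      using that by (simp add: u power_eq_if)
    ultimately show ?thesis
      by (cases "i = 0") (simp_all add: \<alpha>_def g_def)
  qed
  then have "det (mat n n (\<lambda>(i, j). zfun q \<gamma> s \<xi> (u i) (v j)))
      = det (mat n n (\<lambda>(i, j). \<alpha> i * g (i - 1) j + \<beta> i * g i j))"
    by (intro arg_cong[of _ _ det] cong_mat) auto
  also have "\<dots> = (\<Prod>i<n. \<beta> i) * det (cauchy_mat n (\<lambda>i. q * u i) v)"
    unfolding cauchy_mat_def g_def[abs_def] mult.assoc[symmetric]
    by (rule det_mat_bidiagonal_combination) (simp add: \<alpha>_def)
  also have "(\<Prod>i<n. \<beta> i)
      = (\<Prod>i<n. q ^ Suc i) * (\<Prod>i<n. (1 - \<gamma> * q powi (- int i)) * (1 - s\<^sup>2 * \<gamma> * q powi (- int i - 1)))"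
  proof -
    have "q powi (- int i - 1) = inverse (q ^ Suc i)" for i
    proof -
      have "- int i - 1 = - int (Suc i)" by simp
      then show ?thesis by (simp only: power_int_minus power_int_of_nat)
    qed
    then show ?thesis
      by (simp add: \<beta>_def prod.distrib power_int_minus divide_inverse mult.assoc)
  qed
  finally show ?thesis .
qed

theorem mainTheorem3:
  fixes N :: nat and q \<gamma> s0 \<xi>0 :: complex and u v :: "nat \<Rightarrow> complex"
  assumes "N \<ge> 1"
    and "q \<noteq> 0" "\<gamma> \<noteq> 0" "s0 \<noteq> 0" "\<xi>0 \<noteq> 0"
    and u_def: "\<And>i. u i = inverse (s0 * \<xi>0 * \<gamma>) * q ^ i"
    and "\<And>i j. i < N \<Longrightarrow> j < N \<Longrightarrow> 1 - u i * v j \<noteq> 0"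
    and "\<And>i j. i < N \<Longrightarrow> j < N \<Longrightarrow> 1 - q * u i * v j \<noteq> 0"
    and "\<And>i j. i < j \<Longrightarrow> j < N \<Longrightarrow> u i \<noteq> u j"
    and "\<And>i j. i < j \<Longrightarrow> j < N \<Longrightarrow> v i \<noteq> v j"
  shows "(\<Prod>i<N. \<Prod>j<N. (1 - u i * v j) * (1 - q * u i * v j))
           / (\<Prod>i<N. \<Prod>j\<in>{i<..<N}. (u i - u j) * (v i - v j))
           * det (mat N N (\<lambda>(i, j). zfun q \<gamma> s0 \<xi>0 (u i) (v j)))
         = q ^ (N\<^sup>2)
           * (\<Prod>i<N. \<Prod>j<N. (1 - v i * q ^ j / (s0 * \<xi>0 * \<gamma>)))
           * (\<Prod>j<N. (1 - \<gamma> * q powi (- int j)) * (1 - s0\<^sup>2 * \<gamma> * q powi (- int j - 1)))"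
proof -
  let ?V = "\<Prod>i<N. \<Prod>j\<in>{i<..<N}. (u i - u j) * (v i - v j)"
  let ?Q = "\<Prod>i<N. \<Prod>j<N. 1 - q * u i * v j"
  let ?C = "det (cauchy_mat N (\<lambda>i. q * u i) v)"
  have "?V \<noteq> 0"
    using assms(9,10) by (auto simp: prod_zero_iff)
  have "(\<Prod>i<N. \<Prod>j<N. 1 - u i * v j) = (\<Prod>i<N. \<Prod>j<N. (1 - v i * q ^ j / (s0 * \<xi>0 * \<gamma>)))"
    by (subst prod.swap) (simp add: u_def field_simps)
  then have "(\<Prod>i<N. \<Prod>j<N. (1 - u i * v j) * (1 - q * u i * v j)) / ?V
           * det (mat N N (\<lambda>(i, j). zfun q \<gamma> s0 \<xi>0 (u i) (v j)))
      = (\<Prod>i<N. q ^ Suc i) * (\<Prod>i<N. \<Prod>j<N. (1 - v i * q ^ j / (s0 * \<xi>0 * \<gamma>)))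
           * (\<Prod>j<N. (1 - \<gamma> * q powi (- int j)) * (1 - s0\<^sup>2 * \<gamma> * q powi (- int j - 1)))
           * (?C * ?Q) / ?V"
    by (simp add: prod.distrib det_zfun_mat_geometric[OF assms(2-5) u_def assms(7,8)] ac_simps)
  also have "?C * ?Q = (\<Prod>i<N. q ^ (N - Suc i)) * ?V"
    using assms(8) by (intro det_cauchy_mat_scaled)
  finally show ?thesis
    using \<open>?V \<noteq> 0\<close> by (simp add: power2_eq_square prod_power_complements[symmetric] ac_simps)
qed

end
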